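(* In the setting described in the context, for the iterates of Method 2 one has $\operatorname{zer}(A+B)\subseteq T_k\cap\Gamma_k$ for all $k\in\mathbb N$.
   Context: Let $\mathcal H$ be a real Hilbert space with inner product $\langle\cdot,\cdot\rangle$ and norm $\|\cdot\|$. Let $A_1:\mathcal H\to\mathcal H$ be $\beta$-cocoercive for some $\beta>0$ (i.e. $\langle A_1x-A_1y,x-y\rangle\ge\beta\|A_1x-A_1y\|^2$ for all $x,y$), let $A_2:\mathcal H\to\mathcal H$ be maximally monotone and uniformly continuous, let $B:\mathcal H\rightrightarrows\mathcal H$ be maximally monotone, and set $A:=A_1+A_2$. Assume $\operatorname{zer}(A+B):=\{x:0\in Ax+Bx\}\neq\emptyset$. $J_{\alpha B}:=(I+\alpha B)^{-1}$ for $\alpha>0$, and $P_C$ denotes the orthogonal projection onto a nonempty closed convex set $C$. Fix $\theta,\delta\in(0,1)$, $\bar\delta>0$ with $1-\delta-\bar\delta>0$, and $\alpha_{-1}>0$ with $\alpha_{-1}\le4\beta\bar\delta$. Conceptual Algorithm: pick $x^0\in\mathcal H$. Given $x^k$ and $\alpha_{k-1}$, for $j\in\mathbb N$ let $\bar x^k_j:=J_{\alpha_{k-1}\theta^jB}(x^k-\alpha_{k-1}\theta^jAx^k)$ and let $j(k)$ be the smallest $j\in\mathbb N$ with $\alpha_{k-1}\theta^j\langle A_2x^k-A_2\bar x^k_j,x^k-\bar x^k_j\rangle\le\delta\|x^k-\bar x^k_j\|^2$. Set $\alpha_k:=\alpha_{k-1}\theta^{j(k)}$, $\bar x^k:=J_{\alpha_kB}(x^k-\alpha_kAx^k)$,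 $r_k:=\frac{\bar\delta}{\alpha_k}\|x^k-\bar x^k\|^2$, $T_k:=\{x\in\mathcal H:\langle \frac{x^k-\bar x^k}{\alpha_k}-(A_2x^k-A_2\bar x^k),x-\bar x^k\rangle\le r_k\}$ and $\Gamma_k:=\{x\in\mathcal H:\langle x^0-x^k,x-x^k\rangle\le0\}$. Method 2 sets $x^{k+1}:=P_{T_k\cap\Gamma_k}(x^0)$ and stops if $x^{k+1}=x^k$. *)

theory Defs
  imports "HOL-Analysis.Analysis"
begin

text \<open>Real Hilbert space: type class real_inner together with complete_space.
  Set-valued operators are modelled as functions 'a => 'a set.\<close>

definition monotone_op :: "('a::real_inner \<Rightarrow> 'a set) \<Rightarrow> bool" where
  "monotone_op B \<longleftrightarrow> (\<forall>x y u v. u \<in> B x \<longrightarrow> v \<in> B y \<longrightarrow> inner (u - v) (x - y) \<ge> 0)"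

definition maximal_monotone :: "('a::real_inner \<Rightarrow> 'a set) \<Rightarrow> bool" where
  "maximal_monotone B \<longleftrightarrow> monotone_op B \<and>
     (\<forall>x u. (\<forall>y v. v \<in> B y \<longrightarrow> inner (u - v) (x - y) \<ge> 0) \<longrightarrow> u \<in> B x)"

definition cocoercive :: "real \<Rightarrow> ('a::real_inner \<Rightarrow> 'a) \<Rightarrow> bool" where
  "cocoercive \<beta> T \<longleftrightarrow> (\<forall>x y. inner (T x - T y) (x - y) \<ge> \<beta> * (norm (T x - T y))\<^sup>2)"

definition zer_sum :: "('a::real_vector \<Rightarrow> 'a) \<Rightarrow> ('a \<Rightarrow> 'a set) \<Rightarrow> 'a set" where
  "zer_sum A B = {x. 0 \<in> (\<lambda>b. A x + b) ` B x}"

text \<open>Resolvent J_{\<alpha>B} = (I + \<alpha>B)^{-1}, as a (single-valued) function.\<close>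
definition resolvent :: "real \<Rightarrow> ('a::real_vector \<Rightarrow> 'a set) \<Rightarrow> 'a \<Rightarrow> 'a" where
  "resolvent \<alpha> B z = (THE y. z \<in> (\<lambda>b. y + \<alpha> *\<^sub>R b) ` B y)"

definition proj :: "'a::real_normed_vector set \<Rightarrow> 'a \<Rightarrow> 'a" where
  "proj C z = (THE p. p \<in> C \<and> (\<forall>y\<in>C. norm (z - p) \<le> norm (z - y)))"

end

theory Submission
  imports Defs
begin

(* A zero z of A + B lies in every cut T_k: with x_k - alpha_k A x_k = xbar_k + alpha_k b,
   b in B xbar_k, monotonicity of B and A2 bound the defining expression of T_k by
   <A1 x_k - A1 z, x_k - xbar_k> - <A1 x_k - A1 z, x_k - z>, and cocoercivity of A1 together
   with alpha_k <= 4 beta deltabar bounds this by deltabar / alpha_k |x_k - xbar_k|^2.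
   It lies in every Gamma_k by induction: x_(k+1) is the projection of x_0 onto the closed
   convex set T_k inter Gamma_k, which contains z, and the variational inequality of the
   projection is exactly the defining inequality of Gamma_(k+1).
   Both Hilbert-space facts behind this -- projections onto closed convex sets exist, and
   resolvents of maximal monotone operators are everywhere defined (Minty) -- come from
   minimizing a strongly midpoint-convex, lower semicontinuous function over a complete space. *)

lemma nonneg_if_nonneg_perturbations:
  fixes a b :: real
  assumes "\<And>t. 0 < t \<Longrightarrow> t \<le> 1 \<Longrightarrow> 0 \<le> a + t * b"
  shows "0 \<le> a"
proof (rule tendsto_lowerbound)
  show "((\<lambda>t. a + t * b) \<longlongrightarrow> a) (at_right 0)"
    by (auto intro!: tendsto_eq_intros)
  show "\<forall>\<^sub>F t in at_right 0. 0 \<le> a + t * b"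
    unfolding eventually_at_right_field using assms by (intro exI[of _ 1]) auto
qed simp

lemma norm_midpoint_squared:
  fixes p q :: "'a::real_inner"
  shows "(norm ((1/2) *\<^sub>R (p + q)))\<^sup>2 = (norm p)\<^sup>2 / 2 + (norm q)\<^sup>2 / 2 - (norm (p - q))\<^sup>2 / 4"
  by (simp add: power2_norm_eq_inner inner_add_left inner_add_right inner_diff_left
      inner_diff_right inner_commute field_simps)

section \<open>Nearest points in Hilbert space\<close>

lemma strongly_midconvex_attains_min:
  fixes K :: "'a::{real_normed_vector,complete_space} set" and f :: "'a \<Rightarrow> real"
  assumes "K \<noteq> {}" and "\<kappa> > 0"
    and midpoint: "\<And>p q. p \<in> K \<Longrightarrow> q \<in> K \<Longrightarrow> (1/2) *\<^sub>R (p + q) \<in> K \<and>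
               f ((1/2) *\<^sub>R (p + q)) \<le> (f p + f q) / 2 - \<kappa> * (norm (p - q))\<^sup>2"
    and bounded_below: "\<And>p. p \<in> K \<Longrightarrow> b \<le> f p"
    and lsc: "\<And>s p L. (\<And>n. s n \<in> K) \<Longrightarrow> s \<longlonglongrightarrow> p \<Longrightarrow> (\<lambda>n. f (s n)) \<longlonglongrightarrow> L \<Longrightarrow>
               p \<in> K \<and> f p \<le> L"
  shows "\<exists>p\<in>K. \<forall>q\<in>K. f p \<le> f q"
proof -
  define m where "m = Inf (f ` K)"
  have bdd: "bdd_below (f ` K)"
    using bounded_below by (intro bdd_belowI2)
  have m_le: "m \<le> f q" if "q \<in> K" for q
    unfolding m_def using bdd that by (simp add: cInf_lower)
  have "\<exists>p\<in>K. f p < m + inverse (real (Suc n))" for n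
  proof (rule ccontr)
    assume "\<not> ?thesis"
    then have "m + inverse (real (Suc n)) \<le> m"
      unfolding m_def using \<open>K \<noteq> {}\<close> by (intro cInf_greatest) force+
    then show False by simp
  qed
  then obtain s where s: "\<And>n. s n \<in> K" and s_small: "\<And>n. f (s n) < m + inverse (real (Suc n))"
    by metis
  have s_close: "\<kappa> * (norm (s n - s k))\<^sup>2 < inverse (real (Suc (min n k)))" for n k
  proof -
    have "m \<le> (f (s n) + f (s k)) / 2 - \<kappa> * (norm (s n - s k))\<^sup>2"
      using midpoint[OF s s] m_le by (meson order_trans)
    moreover have "inverse (real (Suc n)) \<le> inverse (real (Suc (min n k)))"
      and "inverse (real (Suc k)) \<le> inverse (real (Suc (min n k)))"
      by (simp_all add: field_simps)
    ultimately show ?thesis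
      using s_small[of n] s_small[of k] by argo
  qed
  have "Cauchy s"
  proof (rule CauchyI)
    fix e :: real
    assume "0 < e"
    then obtain M where M: "inverse (real (Suc M)) < \<kappa> * e\<^sup>2"
      using reals_Archimedean[of "\<kappa> * e\<^sup>2"] \<open>\<kappa> > 0\<close> by auto
    have "norm (s n - s k) < e" if "M \<le> n" "M \<le> k" for n k
    proof -
      have "inverse (real (Suc (min n k))) \<le> inverse (real (Suc M))"
        using that by (simp add: field_simps)
      then have "\<kappa> * (norm (s n - s k))\<^sup>2 < \<kappa> * e\<^sup>2"
        using s_close[of n k] M by linarith
      then have "(norm (s n - s k))\<^sup>2 < e\<^sup>2"
        using \<open>\<kappa> > 0\<close> by simp
      then show ?thesis
        using \<open>0 < e\<close> by (simp add: power_less_imp_less_base)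
    qed
    then show "\<exists>M. \<forall>n\<ge>M. \<forall>k\<ge>M. norm (s n - s k) < e"
      by blast
  qed
  then obtain p where "s \<longlonglongrightarrow> p"
    using Cauchy_convergent_iff convergent_def by blast
  moreover have "(\<lambda>n. f (s n)) \<longlonglongrightarrow> m"
  proof (rule tendsto_sandwich[of "\<lambda>n. m" _ _ "\<lambda>n. m + inverse (real (Suc n))"])
    show "\<forall>\<^sub>F n in sequentially. m \<le> f (s n)"
      using m_le s by simp
    show "\<forall>\<^sub>F n in sequentially. f (s n) \<le> m + inverse (real (Suc n))"
      using s_small by (simp add: less_imp_le)
    show "(\<lambda>n. m + inverse (real (Suc n))) \<longlonglongrightarrow> m"
      using tendsto_add[OF tendsto_const LIMSEQ_inverse_real_of_nat, of m] by simp
  qed simp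
  ultimately have "p \<in> K" "f p \<le> m"
    using lsc[OF s] by auto
  then show ?thesis
    using m_le by force
qed

lemma nearest_point_exists:
  fixes C :: "'a::{real_inner,complete_space} set"
  assumes "convex C" and "closed C" and "C \<noteq> {}"
  shows "\<exists>p\<in>C. \<forall>y\<in>C. dist z p \<le> dist z y"
proof -
  have "\<exists>p\<in>C. \<forall>y\<in>C. (norm (z - p))\<^sup>2 \<le> (norm (z - y))\<^sup>2"
  proof (rule strongly_midconvex_attains_min[where f = "\<lambda>p. (norm (z - p))\<^sup>2" and \<kappa> = "1/4" and b = 0])
    fix p q
    assume "p \<in> C" "q \<in> C"
    then have "(1/2) *\<^sub>R (p + q) \<in> C"
      using convexD[OF \<open>convex C\<close>, of p q "1/2" "1/2"] by (simp add: scaleR_add_right)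
    moreover have "(norm (z - (1/2) *\<^sub>R (p + q)))\<^sup>2
        = ((norm (z - p))\<^sup>2 + (norm (z - q))\<^sup>2) / 2 - 1/4 * (norm (p - q))\<^sup>2"
      by (simp add: power2_norm_eq_inner inner_add_left inner_add_right inner_diff_left
          inner_diff_right inner_commute field_simps)
    ultimately show "(1/2) *\<^sub>R (p + q) \<in> C \<and> (norm (z - (1/2) *\<^sub>R (p + q)))\<^sup>2
        \<le> ((norm (z - p))\<^sup>2 + (norm (z - q))\<^sup>2) / 2 - 1/4 * (norm (p - q))\<^sup>2"
      by simp
  next
    fix s p L
    assume s: "\<And>n. s n \<in> C" and "s \<longlonglongrightarrow> p" and L: "(\<lambda>n. (norm (z - s n))\<^sup>2) \<longlonglongrightarrow> L"
    have "p \<in> C"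
      using \<open>closed C\<close> s \<open>s \<longlonglongrightarrow> p\<close> closed_sequentially by blast
    moreover have "(\<lambda>n. (norm (z - s n))\<^sup>2) \<longlonglongrightarrow> (norm (z - p))\<^sup>2"
      by (intro tendsto_intros \<open>s \<longlonglongrightarrow> p\<close>)
    then have "(norm (z - p))\<^sup>2 = L"
      using L LIMSEQ_unique by blast
    ultimately show "p \<in> C \<and> (norm (z - p))\<^sup>2 \<le> L"
      by simp
  qed (use assms in auto)
  then show ?thesis
    unfolding dist_norm by (meson norm_ge_zero power2_le_imp_le)
qed

lemma
  fixes C :: "'a::{real_inner,complete_space} set"
  assumes "convex C" and "closed C" and "C \<noteq> {}"
  shows proj_in: "proj C z \<in> C"
    and proj_nearest: "\<forall>y\<in>C. dist z (proj C z) \<le> dist z y"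
proof -
  have "\<exists>!p. p \<in> C \<and> (\<forall>y\<in>C. dist z p \<le> dist z y)"
    using nearest_point_exists[OF assms] any_closest_point_unique[OF assms(1,2)] by blast
  then have "proj C z \<in> C \<and> (\<forall>y\<in>C. dist z (proj C z) \<le> dist z y)"
    unfolding proj_def dist_norm by (rule theI')
  then show "proj C z \<in> C" "\<forall>y\<in>C. dist z (proj C z) \<le> dist z y"
    by auto
qed

lemma proj_variational_ineq:
  fixes C :: "'a::{real_inner,complete_space} set"
  assumes "convex C" and "closed C" and "y \<in> C"
  shows "inner (z - proj C z) (y - proj C z) \<le> 0"
proof -
  have "C \<noteq> {}"
    using \<open>y \<in> C\<close> by blast
  then show ?thesis
    using any_closest_point_dot[OF assms(1,2) proj_in _ proj_nearest] assms by blast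
qed

section \<open>Minty's theorem\<close>

lemma monotone_opD:
  "monotone_op B \<Longrightarrow> u \<in> B x \<Longrightarrow> v \<in> B y \<Longrightarrow> 0 \<le> inner (u - v) (x - y)"
  unfolding monotone_op_def by blast

lemma maximal_monotoneD:
  assumes "maximal_monotone B"
  shows "monotone_op B"
    and "(\<And>y v. v \<in> B y \<Longrightarrow> 0 \<le> inner (u - v) (x - y)) \<Longrightarrow> u \<in> B x"
  using assms unfolding maximal_monotone_def by blast+

definition op_graph :: "('a \<Rightarrow> 'a set) \<Rightarrow> ('a \<times> 'a) set" where
  "op_graph B = {(x, u). u \<in> B x}"

definition coupling :: "'a::real_inner \<times> 'a \<Rightarrow> 'a \<times> 'a \<Rightarrow> real" where
  "coupling g p = inner p (snd g, fst g) - inner (fst g) (snd g)"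

text \<open>The Fitzpatrick function of \<open>B\<close>. As a real supremum it is meaningful only on
  \<open>fitzpatrick_dom B\<close>, where the family is bounded above.\<close>

definition fitzpatrick :: "('a::real_inner \<Rightarrow> 'a set) \<Rightarrow> 'a \<times> 'a \<Rightarrow> real" where
  "fitzpatrick B p = (SUP g\<in>op_graph B. coupling g p)"

definition fitzpatrick_dom :: "('a::real_inner \<Rightarrow> 'a set) \<Rightarrow> ('a \<times> 'a) set" where
  "fitzpatrick_dom B = {p. bdd_above ((\<lambda>g. coupling g p) ` op_graph B)}"

lemma inner_minus_coupling:
  "inner (fst p) (snd p) - coupling g p = inner (snd p - snd g) (fst p - fst g)"
  by (cases p; cases g) (simp add: coupling_def inner_diff_left inner_diff_right inner_commute)

lemma coupling_affine:
  "coupling g ((1 - t) *\<^sub>R p + t *\<^sub>R q) = (1 - t) * coupling g p + t * coupling g q"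
  by (simp add: coupling_def algebra_simps)

lemma coupling_le_inner:
  assumes "monotone_op B" and "g \<in> op_graph B" and "p \<in> op_graph B"
  shows "coupling g p \<le> inner (fst p) (snd p)"
  using assms monotone_opD[of B "snd p" "fst p" "snd g" "fst g"] inner_minus_coupling[of p g]
  by (auto simp: op_graph_def)

lemma fitzpatrick_domI:
  "(\<And>g. g \<in> op_graph B \<Longrightarrow> coupling g p \<le> M) \<Longrightarrow> p \<in> fitzpatrick_dom B"
  unfolding fitzpatrick_dom_def mem_Collect_eq by (rule bdd_aboveI2)

lemma fitzpatrick_least:
  "op_graph B \<noteq> {} \<Longrightarrow> (\<And>g. g \<in> op_graph B \<Longrightarrow> coupling g p \<le> M) \<Longrightarrow> fitzpatrick B p \<le> M"
  unfolding fitzpatrick_def by (rule cSUP_least)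

lemma coupling_le_fitzpatrick:
  assumes "p \<in> fitzpatrick_dom B" and "g \<in> op_graph B"
  shows "coupling g p \<le> fitzpatrick B p"
  using cSUP_upper[OF assms(2)] assms(1) unfolding fitzpatrick_def fitzpatrick_dom_def by simp

lemma op_graph_nonempty:
  assumes "maximal_monotone B"
  shows "op_graph B \<noteq> {}"
proof
  assume empty: "op_graph B = {}"
  then have "0 \<in> B 0"
    by (intro maximal_monotoneD(2)[OF assms]) (auto simp: op_graph_def)
  with empty show False
    by (auto simp: op_graph_def)
qed

lemma op_graph_subset_fitzpatrick_dom:
  "monotone_op B \<Longrightarrow> op_graph B \<subseteq> fitzpatrick_dom B"
  by (blast intro: fitzpatrick_domI coupling_le_inner)

lemma fitzpatrick_le_inner:
  assumes "maximal_monotone B" and "p \<in> op_graph B"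
  shows "fitzpatrick B p \<le> inner (fst p) (snd p)"
  using assms by (blast intro: fitzpatrick_least op_graph_nonempty coupling_le_inner maximal_monotoneD(1))

lemma inner_le_fitzpatrick:
  assumes "maximal_monotone B" and p: "p \<in> fitzpatrick_dom B"
  shows "inner (fst p) (snd p) \<le> fitzpatrick B p"
proof (rule ccontr)
  assume less: "\<not> ?thesis"
  have "snd p \<in> B (fst p)"
  proof (rule maximal_monotoneD(2)[OF assms(1)])
    fix y v
    assume "v \<in> B y"
    then have "coupling (y, v) p < inner (fst p) (snd p)"
      using coupling_le_fitzpatrick[OF p] less by (force simp: op_graph_def)
    then show "0 \<le> inner (snd p - v) (fst p - y)"
      using inner_minus_coupling[of p "(y, v)"] by simp
  qed
  then have "inner (fst p) (snd p) \<le> fitzpatrick B p"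
    using coupling_le_fitzpatrick[OF p, of p] inner_minus_coupling[of p p]
    by (simp add: op_graph_def case_prod_unfold)
  with less show False
    by simp
qed

lemma fitzpatrick_convex:
  assumes "op_graph B \<noteq> {}" and "p \<in> fitzpatrick_dom B" and "q \<in> fitzpatrick_dom B"
    and "0 \<le> t" and "t \<le> 1"
  shows "(1 - t) *\<^sub>R p + t *\<^sub>R q \<in> fitzpatrick_dom B"
    and "fitzpatrick B ((1 - t) *\<^sub>R p + t *\<^sub>R q) \<le> (1 - t) * fitzpatrick B p + t * fitzpatrick B q"
proof -
  have bound: "coupling g ((1 - t) *\<^sub>R p + t *\<^sub>R q) \<le> (1 - t) * fitzpatrick B p + t * fitzpatrick B q"
    if "g \<in> op_graph B" for g
    unfolding coupling_affine using assms that
    by (intro add_mono mult_left_mono coupling_le_fitzpatrick) auto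
  then show "(1 - t) *\<^sub>R p + t *\<^sub>R q \<in> fitzpatrick_dom B"
    by (rule fitzpatrick_domI)
  from bound show "fitzpatrick B ((1 - t) *\<^sub>R p + t *\<^sub>R q) \<le> (1 - t) * fitzpatrick B p + t * fitzpatrick B q"
    by (rule fitzpatrick_least[OF assms(1)])
qed

lemma fitzpatrick_lsc:
  assumes "op_graph B \<noteq> {}" and "\<And>n. s n \<in> fitzpatrick_dom B" and "s \<longlonglongrightarrow> p"
    and "(\<lambda>n. fitzpatrick B (s n)) \<longlonglongrightarrow> L"
  shows "p \<in> fitzpatrick_dom B" and "fitzpatrick B p \<le> L"
proof -
  have bound: "coupling g p \<le> L" if "g \<in> op_graph B" for g
  proof (rule LIMSEQ_le)
    show "(\<lambda>n. coupling g (s n)) \<longlonglongrightarrow> coupling g p"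
      unfolding coupling_def by (intro tendsto_intros assms(3))
    show "\<exists>N. \<forall>n\<ge>N. coupling g (s n) \<le> fitzpatrick B (s n)"
      using coupling_le_fitzpatrick[OF assms(2) that] by blast
  qed (fact assms(4))
  then show "p \<in> fitzpatrick_dom B"
    by (rule fitzpatrick_domI)
  from bound show "fitzpatrick B p \<le> L"
    by (rule fitzpatrick_least[OF assms(1)])
qed

lemma fitzpatrick_regularized_min_optimality:
  assumes mm: "maximal_monotone B" and p0: "p0 \<in> fitzpatrick_dom B"
    and min: "\<And>q. q \<in> fitzpatrick_dom B \<Longrightarrow>
      fitzpatrick B p0 + (norm p0)\<^sup>2 / 2 \<le> fitzpatrick B q + (norm q)\<^sup>2 / 2"
    and g: "g \<in> op_graph B"
  shows "fitzpatrick B p0 + inner p0 (p0 - g) \<le> inner (fst g) (snd g)"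
proof -
  have "0 \<le> (inner (fst g) (snd g) - fitzpatrick B p0 - inner p0 (p0 - g)) + t * ((norm (g - p0))\<^sup>2 / 2)"
    if t: "0 < t" "t \<le> 1" for t
  proof -
    let ?q = "(1 - t) *\<^sub>R p0 + t *\<^sub>R g"
    have ne: "op_graph B \<noteq> {}"
      using g by blast
    have g_dom: "g \<in> fitzpatrick_dom B"
      using g op_graph_subset_fitzpatrick_dom maximal_monotoneD(1)[OF mm] by blast
    have "fitzpatrick B ?q \<le> (1 - t) * fitzpatrick B p0 + t * fitzpatrick B g"
      using fitzpatrick_convex(2)[OF ne p0 g_dom] t by simp
    also have "\<dots> \<le> (1 - t) * fitzpatrick B p0 + t * inner (fst g) (snd g)"
      using fitzpatrick_le_inner[OF mm g] t by simp
    finally have "fitzpatrick B ?q \<le> (1 - t) * fitzpatrick B p0 + t * inner (fst g) (snd g)" .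
    moreover have "fitzpatrick B p0 + (norm p0)\<^sup>2 / 2 \<le> fitzpatrick B ?q + (norm ?q)\<^sup>2 / 2"
      using min fitzpatrick_convex(1)[OF ne p0 g_dom] t by simp
    moreover have "(norm ?q)\<^sup>2 = (norm p0)\<^sup>2 + 2 * t * inner p0 (g - p0) + t\<^sup>2 * (norm (g - p0))\<^sup>2"
      unfolding power2_norm_eq_inner
      by (simp add: inner_commute algebra_simps power2_eq_square)
    ultimately have "0 \<le> t * ((inner (fst g) (snd g) - fitzpatrick B p0 - inner p0 (p0 - g))
        + t * ((norm (g - p0))\<^sup>2 / 2))"
      by (simp add: algebra_simps power2_eq_square)
    then show ?thesis
      using t by (simp add: zero_le_mult_iff)
  qed
  from nonneg_if_nonneg_perturbations[OF this] show ?thesis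
    by simp
qed

text \<open>Minty's theorem at the origin: a minimizer \<open>(x, u)\<close> of the Fitzpatrick function plus
  half the squared norm satisfies \<open>u = - x \<in> B x\<close>.\<close>

lemma maximal_monotone_ex_neg_mem:
  fixes B :: "'a::{real_inner,complete_space} \<Rightarrow> 'a set"
  assumes mm: "maximal_monotone B"
  shows "\<exists>x. - x \<in> B x"
proof -
  let ?f = "\<lambda>p. fitzpatrick B p + (norm p)\<^sup>2 / 2"
  have ne: "op_graph B \<noteq> {}"
    by (rule op_graph_nonempty[OF mm])
  have norm_pair: "(norm p)\<^sup>2 = inner (fst p) (fst p) + inner (snd p) (snd p)" for p :: "'a \<times> 'a"
    by (cases p) (simp add: power2_norm_eq_inner)
  have "\<exists>p\<in>fitzpatrick_dom B. \<forall>q\<in>fitzpatrick_dom B. ?f p \<le> ?f q"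
  proof (rule strongly_midconvex_attains_min[where f = ?f and \<kappa> = "1/8" and b = 0])
    show "fitzpatrick_dom B \<noteq> {}"
      using ne op_graph_subset_fitzpatrick_dom maximal_monotoneD(1)[OF mm] by blast
  next
    fix p q
    assume "p \<in> fitzpatrick_dom B" "q \<in> fitzpatrick_dom B"
    moreover have "(1/2) *\<^sub>R (p + q) = (1 - 1/2) *\<^sub>R p + (1/2) *\<^sub>R q"
      by (simp add: scaleR_add_right)
    ultimately show "(1/2) *\<^sub>R (p + q) \<in> fitzpatrick_dom B \<and>
        ?f ((1/2) *\<^sub>R (p + q)) \<le> (?f p + ?f q) / 2 - 1/8 * (norm (p - q))\<^sup>2"
      using fitzpatrick_convex[OF ne, of p q "1/2"] norm_midpoint_squared[of p q] by simp argo
  next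
    fix p
    assume "p \<in> fitzpatrick_dom B"
    then have "inner (fst p) (snd p) \<le> fitzpatrick B p"
      by (rule inner_le_fitzpatrick[OF mm])
    moreover have "0 \<le> inner (fst p + snd p) (fst p + snd p)"
      by simp
    ultimately show "0 \<le> ?f p"
      unfolding norm_pair by (simp add: inner_add_left inner_add_right inner_commute field_simps)
  next
    fix s p L
    assume s: "\<And>n. s n \<in> fitzpatrick_dom B" and "s \<longlonglongrightarrow> p" and "(\<lambda>n. ?f (s n)) \<longlonglongrightarrow> L"
    then have "(\<lambda>n. ?f (s n) - (norm (s n))\<^sup>2 / 2) \<longlonglongrightarrow> L - (norm p)\<^sup>2 / 2"
      by (intro tendsto_intros) auto
    then have "(\<lambda>n. fitzpatrick B (s n)) \<longlonglongrightarrow> L - (norm p)\<^sup>2 / 2"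
      by simp
    from fitzpatrick_lsc[OF ne s \<open>s \<longlonglongrightarrow> p\<close> this]
    show "p \<in> fitzpatrick_dom B \<and> ?f p \<le> L"
      by simp
  qed simp
  then obtain x u where p0: "(x, u) \<in> fitzpatrick_dom B"
    and min: "\<And>q. q \<in> fitzpatrick_dom B \<Longrightarrow> ?f (x, u) \<le> ?f q"
    by auto
  have "inner (x + u) (x + u) \<le> inner ((- x) - v) ((- u) - y)" if "v \<in> B y" for y v
  proof -
    have "fitzpatrick B (x, u) + inner (x, u) ((x, u) - (y, v)) \<le> inner y v"
      using fitzpatrick_regularized_min_optimality[OF mm p0 min, of "(y, v)"] that
      by (simp add: op_graph_def)
    moreover have "inner x u \<le> fitzpatrick B (x, u)"
      using inner_le_fitzpatrick[OF mm p0] by simp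
    ultimately show ?thesis
      by (simp add: inner_add_left inner_add_right inner_diff_left inner_diff_right inner_commute)
  qed
  moreover from this have "- x \<in> B (- u)"
    by (intro maximal_monotoneD(2)[OF mm]) (auto intro: order_trans[OF inner_ge_zero])
  ultimately have "inner (x + u) (x + u) \<le> 0"
    by fastforce
  then have "x + u = 0"
    by (meson inner_gt_zero_iff not_le)
  with \<open>- x \<in> B (- u)\<close> have "- (- u) \<in> B (- u)"
    by (simp add: add_eq_0_iff)
  then show ?thesis
    by blast
qed

lemma maximal_monotone_scaled_shift:
  assumes mm: "maximal_monotone B" and "\<alpha> > 0"
  shows "maximal_monotone (\<lambda>z. (\<lambda>b. \<alpha> *\<^sub>R b) ` B (z + w))"
  unfolding maximal_monotone_def monotone_op_def
proof (intro conjI allI impI)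
  fix x y u v
  assume "u \<in> (\<lambda>b. \<alpha> *\<^sub>R b) ` B (x + w)" and "v \<in> (\<lambda>b. \<alpha> *\<^sub>R b) ` B (y + w)"
  then obtain a c where a: "a \<in> B (x + w)" "u = \<alpha> *\<^sub>R a" and c: "c \<in> B (y + w)" "v = \<alpha> *\<^sub>R c"
    by auto
  have "0 \<le> \<alpha> * inner (a - c) ((x + w) - (y + w))"
    using monotone_opD[OF maximal_monotoneD(1)[OF mm] a(1) c(1)] \<open>\<alpha> > 0\<close> by simp
  then show "0 \<le> inner (u - v) (x - y)"
    using a c by (simp add: inner_diff_left right_diff_distrib)
next
  fix x u
  assume h: "\<forall>y v. v \<in> (\<lambda>b. \<alpha> *\<^sub>R b) ` B (y + w) \<longrightarrow> 0 \<le> inner (u - v) (x - y)"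
  have "(1 / \<alpha>) *\<^sub>R u \<in> B (x + w)"
  proof (rule maximal_monotoneD(2)[OF mm])
    fix y v
    assume "v \<in> B y"
    then have "0 \<le> inner (u - \<alpha> *\<^sub>R v) (x - (y - w))"
      using h by force
    then have "0 \<le> (1 / \<alpha>) * inner (u - \<alpha> *\<^sub>R v) (x - (y - w))"
      using \<open>\<alpha> > 0\<close> by simp
    also have "\<dots> = inner ((1 / \<alpha>) *\<^sub>R u - v) ((x + w) - y)"
      using \<open>\<alpha> > 0\<close> by (simp add: algebra_simps)
    finally show "0 \<le> inner ((1 / \<alpha>) *\<^sub>R u - v) ((x + w) - y)" .
  qed
  then have "\<alpha> *\<^sub>R ((1 / \<alpha>) *\<^sub>R u) \<in> (\<lambda>b. \<alpha> *\<^sub>R b) ` B (x + w)"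
    by (rule imageI)
  then show "u \<in> (\<lambda>b. \<alpha> *\<^sub>R b) ` B (x + w)"
    using \<open>\<alpha> > 0\<close> by simp
qed

lemma resolvent_point_unique:
  assumes "monotone_op B" and "\<alpha> > 0" and "b1 \<in> B y1" and "b2 \<in> B y2"
    and "y1 + \<alpha> *\<^sub>R b1 = y2 + \<alpha> *\<^sub>R b2"
  shows "y1 = y2"
proof -
  have d: "y1 - y2 = \<alpha> *\<^sub>R (b2 - b1)"
    using assms(5) by (simp add: algebra_simps)
  have "0 \<le> inner (b1 - b2) (y1 - y2)"
    by (rule monotone_opD[OF assms(1,3,4)])
  then have "0 \<le> - \<alpha> * inner (b1 - b2) (b1 - b2)"
    unfolding d by (simp add: inner_commute algebra_simps)
  then have "inner (b1 - b2) (b1 - b2) \<le> 0"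
    using \<open>\<alpha> > 0\<close> by (simp add: mult_le_0_iff)
  then have "b1 = b2"
    by (meson inner_gt_zero_iff not_le right_minus_eq)
  then show ?thesis
    using d by simp
qed

lemma resolvent_mem:
  fixes B :: "'a::{real_inner,complete_space} \<Rightarrow> 'a set"
  assumes mm: "maximal_monotone B" and "\<alpha> > 0"
  shows "\<exists>b\<in>B (resolvent \<alpha> B w). w = resolvent \<alpha> B w + \<alpha> *\<^sub>R b"
proof -
  obtain z where "- z \<in> (\<lambda>b. \<alpha> *\<^sub>R b) ` B (z + w)"
    using maximal_monotone_ex_neg_mem[OF maximal_monotone_scaled_shift[OF assms]] by blast
  then obtain b where b: "b \<in> B (z + w)" "- z = \<alpha> *\<^sub>R b"
    by blast
  then have "w = (z + w) + \<alpha> *\<^sub>R b"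
    by (simp add: b(2)[symmetric])
  have "\<exists>!y. w \<in> (\<lambda>b. y + \<alpha> *\<^sub>R b) ` B y"
  proof (rule ex1I)
    show "w \<in> (\<lambda>b. (z + w) + \<alpha> *\<^sub>R b) ` B (z + w)"
      using b(1) \<open>w = (z + w) + \<alpha> *\<^sub>R b\<close> by blast
  next
    fix y
    assume "w \<in> (\<lambda>b. y + \<alpha> *\<^sub>R b) ` B y"
    then obtain b' where "b' \<in> B y" "w = y + \<alpha> *\<^sub>R b'"
      by blast
    then show "y = z + w"
      using resolvent_point_unique[OF maximal_monotoneD(1)[OF mm] \<open>\<alpha> > 0\<close>] b(1)
        \<open>w = (z + w) + \<alpha> *\<^sub>R b\<close> by metis
  qed
  then have "w \<in> (\<lambda>b. resolvent \<alpha> B w + \<alpha> *\<^sub>R b) ` B (resolvent \<alpha> B w)"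
    unfolding resolvent_def by (rule theI')
  then show ?thesis
    by blast
qed

section \<open>The cuts of Method 2\<close>

lemma inner_le_weighted_squares:
  fixes e d :: "'a::real_inner"
  assumes "\<beta> > 0"
  shows "inner e d \<le> \<beta> * (norm e)\<^sup>2 + (norm d)\<^sup>2 / (4 * \<beta>)"
proof -
  have "0 \<le> (norm ((2 * \<beta>) *\<^sub>R e - d))\<^sup>2"
    by simp
  also have "\<dots> = 4 * \<beta> * (\<beta> * (norm e)\<^sup>2 + (norm d)\<^sup>2 / (4 * \<beta>) - inner e d)"
    using assms unfolding power2_norm_eq_inner
    by (simp add: inner_diff_left inner_diff_right inner_commute field_simps power2_eq_square)
  finally show ?thesis
    using assms by (simp add: zero_le_mult_iff)
qed

lemma
  fixes p q :: "'a::real_inner"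
  shows convex_shifted_halfspace_le: "convex {z. inner p (z - q) \<le> r}"
    and closed_shifted_halfspace_le: "closed {z. inner p (z - q) \<le> r}"
proof -
  have eq: "{z. inner p (z - q) \<le> r} = {z. inner p z \<le> r + inner p q}"
    by (auto simp: inner_diff_right)
  show "convex {z. inner p (z - q) \<le> r}"
    unfolding eq by (rule convex_halfspace_le)
  show "closed {z. inner p (z - q) \<le> r}"
    unfolding eq by (rule closed_halfspace_le)
qed

lemma backtracking_step_bounds:
  fixes \<alpha> :: "nat \<Rightarrow> real"
  assumes "0 < \<theta>" and "\<theta> \<le> 1" and "0 < \<alpha>0"
    and backtrack: "\<And>k. k \<le> N \<Longrightarrow> \<exists>j. \<alpha> k = (if k = 0 then \<alpha>0 else \<alpha> (k - 1)) * \<theta> ^ j"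
  shows "k \<le> N \<Longrightarrow> 0 < \<alpha> k \<and> \<alpha> k \<le> \<alpha>0"
proof (induction k)
  case 0
  then obtain j where "\<alpha> 0 = \<alpha>0 * \<theta> ^ j"
    using backtrack by fastforce
  moreover have "0 < \<theta> ^ j" "\<theta> ^ j \<le> 1"
    using assms(1,2) by (simp_all add: power_le_one)
  ultimately show ?case
    using \<open>0 < \<alpha>0\<close> by (simp add: mult_left_le)
next
  case (Suc k)
  then obtain j where "\<alpha> (Suc k) = \<alpha> k * \<theta> ^ j"
    using backtrack by fastforce
  moreover have "0 < \<theta> ^ j" "\<theta> ^ j \<le> 1"
    using assms(1,2) by (simp_all add: power_le_one)
  moreover have "0 < \<alpha> k" "\<alpha> k \<le> \<alpha>0"
    using Suc by auto
  ultimately have "0 < \<alpha> (Suc k)" "\<alpha> (Suc k) \<le> \<alpha> k"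
    by (simp_all add: mult_left_le)
  with \<open>\<alpha> k \<le> \<alpha>0\<close> show ?case
    by simp
qed

lemma subset_projection_halfspaces:
  fixes x :: "nat \<Rightarrow> 'a::{real_inner,complete_space}"
  assumes "\<And>k. k \<le> N \<Longrightarrow> S \<subseteq> T k" and "\<And>k. convex (T k)" and "\<And>k. closed (T k)"
    and step: "\<And>k. k < N \<Longrightarrow> x (Suc k) = proj (T k \<inter> {z. inner (x 0 - x k) (z - x k) \<le> 0}) (x 0)"
  shows "k \<le> N \<Longrightarrow> S \<subseteq> {z. inner (x 0 - x k) (z - x k) \<le> 0}"
proof (induction k)
  case 0
  show ?case
    by simp
next
  case (Suc k)
  let ?C = "T k \<inter> {z. inner (x 0 - x k) (z - x k) \<le> 0}"
  have "S \<subseteq> ?C"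
    using Suc assms(1) by simp
  moreover have "convex ?C" "closed ?C"
    using assms(2,3) by (simp_all add: convex_Int closed_Int convex_shifted_halfspace_le
        closed_shifted_halfspace_le)
  ultimately have "inner (x 0 - x (Suc k)) (z - x (Suc k)) \<le> 0" if "z \<in> S" for z
    using proj_variational_ineq[of ?C z "x 0"] step[of k] Suc.prems that by auto
  then show ?case
    by auto
qed

lemma zer_sum_in_cut:
  fixes A1 A2 :: "'a::real_inner \<Rightarrow> 'a"
  assumes coco: "cocoercive \<beta> A1" and "\<beta> > 0"
    and A2_mono: "monotone_op (\<lambda>z. {A2 z})" and B_mono: "monotone_op B"
    and "0 < \<alpha>" and "\<alpha> \<le> 4 * \<beta> * \<delta>bar"
    and b: "b \<in> B xb" and fb_step: "x - \<alpha> *\<^sub>R (A1 x + A2 x) = xb + \<alpha> *\<^sub>R b"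
    and z: "z \<in> zer_sum (\<lambda>z. A1 z + A2 z) B"
  shows "inner ((1 / \<alpha>) *\<^sub>R (x - xb) - (A2 x - A2 xb)) (z - xb) \<le> \<delta>bar / \<alpha> * (norm (x - xb))\<^sup>2"
proof -
  define d e where "d = x - xb" and "e = A1 x - A1 z"
  obtain c where c: "c \<in> B z" "c = - (A1 z + A2 z)"
    using z unfolding zer_sum_def by (auto simp: add_eq_0_iff)
  have "d = \<alpha> *\<^sub>R (A1 x + A2 x + b)"
    using fb_step unfolding d_def by (simp add: algebra_simps)
  then have w: "(1 / \<alpha>) *\<^sub>R d - (A2 x - A2 xb) = b + A1 x + A2 xb"
    using \<open>0 < \<alpha>\<close> by (simp add: algebra_simps)
  have "inner ((1 / \<alpha>) *\<^sub>R d - (A2 x - A2 xb)) (z - xb)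
      = inner b (z - xb) + inner (A1 x + A2 xb) (z - xb)"
    unfolding w by (simp add: inner_add_left)
  also have "\<dots> \<le> inner c (z - xb) + inner (A1 x + A2 xb) (z - xb)"
    using monotone_opD[OF B_mono b c(1)] by (simp add: inner_diff_left inner_diff_right inner_commute)
  also have "\<dots> = inner e (z - xb) - inner (A2 xb - A2 z) (xb - z)"
    unfolding c(2) e_def by (simp add: algebra_simps)
  also have "\<dots> \<le> inner e (z - xb)"
    using monotone_opD[OF A2_mono, of "A2 xb" xb "A2 z" z] by simp
  also have "\<dots> = inner e d - inner (A1 x - A1 z) (x - z)"
    unfolding d_def e_def by (simp add: inner_diff_right)
  also have "\<dots> \<le> inner e d - \<beta> * (norm e)\<^sup>2"
    using coco unfolding cocoercive_def e_def by (simp add: algebra_simps)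
  also have "\<dots> \<le> (norm d)\<^sup>2 / (4 * \<beta>)"
    using inner_le_weighted_squares[OF \<open>\<beta> > 0\<close>, of e d] by simp
  also have "\<dots> = 1 / (4 * \<beta>) * (norm d)\<^sup>2"
    by simp
  also have "\<dots> \<le> \<delta>bar / \<alpha> * (norm d)\<^sup>2"
    using \<open>0 < \<alpha>\<close> \<open>\<beta> > 0\<close> \<open>\<alpha> \<le> 4 * \<beta> * \<delta>bar\<close>
    by (intro mult_right_mono) (simp_all add: field_simps)
  finally show ?thesis
    unfolding d_def .
qed

theorem lemma4p11:
  fixes A1 A2 :: "'a::{real_inner,complete_space} \<Rightarrow> 'a"
    and B :: "'a \<Rightarrow> 'a set"
    and \<beta> \<theta> \<delta> \<delta>bar \<alpha>m1 :: real
    and x :: "nat \<Rightarrow> 'a" and \<alpha> :: "nat \<Rightarrow> real" and N :: nat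
    and A :: "'a \<Rightarrow> 'a" and \<alpha>prev :: "nat \<Rightarrow> real"
    and xbar_ls :: "nat \<Rightarrow> nat \<Rightarrow> 'a" and xbar :: "nat \<Rightarrow> 'a"
    and T \<Gamma> :: "nat \<Rightarrow> 'a set"
  assumes beta_pos: "\<beta> > 0" and coco: "cocoercive \<beta> A1"
    and A2_mm: "maximal_monotone (\<lambda>z. {A2 z})" and A2_uc: "uniformly_continuous_on UNIV A2"
    and B_mm: "maximal_monotone B"
    and A_def: "A \<equiv> \<lambda>z. A1 z + A2 z"
    and zer_ne: "zer_sum A B \<noteq> {}"
    and theta: "0 < \<theta>" "\<theta> < 1" and delta: "0 < \<delta>" "\<delta> < 1"
    and deltabar: "\<delta>bar > 0" "1 - \<delta> - \<delta>bar > 0"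
    and alpham1: "\<alpha>m1 > 0" "\<alpha>m1 \<le> 4 * \<beta> * \<delta>bar"
    and alphaprev_def: "\<alpha>prev \<equiv> \<lambda>k. if k = 0 then \<alpha>m1 else \<alpha> (k - 1)"
    and xbar_ls_def: "xbar_ls \<equiv> \<lambda>k j. resolvent (\<alpha>prev k * \<theta> ^ j) B
                                   (x k - (\<alpha>prev k * \<theta> ^ j) *\<^sub>R A (x k))"
    and linesearch: "\<And>k. k \<le> N \<Longrightarrow> \<alpha> k = \<alpha>prev k * \<theta> ^ (LEAST j.
           \<alpha>prev k * \<theta> ^ j * inner (A2 (x k) - A2 (xbar_ls k j)) (x k - xbar_ls k j)
             \<le> \<delta> * (norm (x k - xbar_ls k j))\<^sup>2)"
    and xbar_def: "xbar \<equiv> \<lambda>k. resolvent (\<alpha> k) B (x k - \<alpha> k *\<^sub>R A (x k))"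
    and T_def: "T \<equiv> \<lambda>k. {z. inner ((1 / \<alpha> k) *\<^sub>R (x k - xbar k) - (A2 (x k) - A2 (xbar k)))
                                 (z - xbar k)
                           \<le> \<delta>bar / \<alpha> k * (norm (x k - xbar k))\<^sup>2}"
    and Gamma_def: "\<Gamma> \<equiv> \<lambda>k. {z. inner (x 0 - x k) (z - x k) \<le> 0}"
    and step: "\<And>k. k < N \<Longrightarrow> x (Suc k) = proj (T k \<inter> \<Gamma> k) (x 0)"
  shows "\<forall>k \<le> N. zer_sum A B \<subseteq> T k \<inter> \<Gamma> k"
proof -
  have B_mono: "monotone_op B" and A2_mono: "monotone_op (\<lambda>z. {A2 z})"
    using B_mm A2_mm by (simp_all add: maximal_monotoneD(1))
  have step_bounds: "0 < \<alpha> k \<and> \<alpha> k \<le> \<alpha>m1" if "k \<le> N" for k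
    using backtracking_step_bounds[OF theta(1) less_imp_le[OF theta(2)] alpham1(1) _ that]
      linesearch unfolding alphaprev_def by blast
  have zer_in_T: "zer_sum A B \<subseteq> T k" if kN: "k \<le> N" for k
  proof
    fix z
    assume "z \<in> zer_sum A B"
    obtain b where "b \<in> B (xbar k)" "x k - \<alpha> k *\<^sub>R A (x k) = xbar k + \<alpha> k *\<^sub>R b"
      using resolvent_mem[OF B_mm, of "\<alpha> k"] step_bounds[OF kN] unfolding xbar_def by auto
    with \<open>z \<in> zer_sum A B\<close> show "z \<in> T k"
      using zer_sum_in_cut[OF coco beta_pos A2_mono B_mono] step_bounds[OF kN] alpham1(2)
      unfolding T_def A_def by auto
  qed
  have T_convex: "convex (T k)" and T_closed: "closed (T k)" for k
    unfolding T_def by (simp_all add: convex_shifted_halfspace_le closed_shifted_halfspace_le)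
  have "zer_sum A B \<subseteq> \<Gamma> k" if "k \<le> N" for k
    using subset_projection_halfspaces[OF zer_in_T T_convex T_closed _ that] step
    unfolding Gamma_def by simp
  with zer_in_T show ?thesis
    by blast
qed

end
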